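(* Let $G$ be a graph with an RDV representation on a rooted tree $T$, and let $v_1$ be a vertex of $G$ that maximizes $y(t(v_1))$ (the distance of $t(v_1)$ from the root) over all vertices. Then $v_1$ is simple in $G$: its closed neighbourhood $N[v_1]$ is a clique, and its elements can be ordered $w_1,\dots,w_k$ so that $N[w_1]\subseteq N[w_2]\subseteq\cdots\subseteq N[w_k]$.
   Context: An RDV representation of a graph $G$ consists of a rooted tree $T$ and, for every vertex $v$ of $G$, a downward path $P(v)$ in $T$ (a path starting at some node and always proceeding from a node to one of its children), such that distinct $v,w$ are adjacent iff $P(v)$ and $P(w)$ share a node. $t(v)$ is the node of $P(v)$ closest to the root, and $y(u)$ denotes the distance of node $u$ from the root. $N[v]$ is the closed neighbourhood of $v$ (the set consisting of $v$ and its neighbours). *)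

theory Defs
  imports Main
begin

definition simple_graph :: "'v set \<Rightarrow> ('v \<Rightarrow> 'v \<Rightarrow> bool) \<Rightarrow> bool" where
  "simple_graph V E \<longleftrightarrow> finite V \<and> (\<forall>a b. E a b \<longrightarrow> a \<in> V \<and> b \<in> V)
     \<and> (\<forall>a b. E a b \<longrightarrow> E b a) \<and> (\<forall>a. \<not> E a a)"

definition closed_nbhd :: "'v set \<Rightarrow> ('v \<Rightarrow> 'v \<Rightarrow> bool) \<Rightarrow> 'v \<Rightarrow> 'v set" where
  "closed_nbhd V E v = {v} \<union> {w \<in> V. E v w}"

definition is_clique :: "('v \<Rightarrow> 'v \<Rightarrow> bool) \<Rightarrow> 'v set \<Rightarrow> bool" where
  "is_clique E C \<longleftrightarrow> (\<forall>a\<in>C. \<forall>b\<in>C. a \<noteq> b \<longrightarrow> E a b)"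

definition simple_vertex :: "'v set \<Rightarrow> ('v \<Rightarrow> 'v \<Rightarrow> bool) \<Rightarrow> 'v \<Rightarrow> bool" where
  "simple_vertex V E v \<longleftrightarrow> is_clique E (closed_nbhd V E v) \<and>
     (\<exists>ws. distinct ws \<and> set ws = closed_nbhd V E v \<and>
        sorted_wrt (\<lambda>a b. closed_nbhd V E a \<subseteq> closed_nbhd V E b) ws)"

text \<open>The tree edges are exactly the pairs (u, par u) for u in N - {r}.\<close>
definition rooted_tree :: "'n set \<Rightarrow> 'n \<Rightarrow> ('n \<Rightarrow> 'n) \<Rightarrow> bool" where
  "rooted_tree N r par \<longleftrightarrow> finite N \<and> r \<in> N \<and>
     (\<forall>u\<in>N - {r}. par u \<in> N) \<and> (\<forall>u\<in>N. \<exists>k. (par ^^ k) u = r)"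

definition depth :: "'n \<Rightarrow> ('n \<Rightarrow> 'n) \<Rightarrow> 'n \<Rightarrow> nat" where
  "depth r par u = (LEAST k. (par ^^ k) u = r)"

definition downward_path :: "'n set \<Rightarrow> 'n \<Rightarrow> ('n \<Rightarrow> 'n) \<Rightarrow> 'n list \<Rightarrow> bool" where
  "downward_path N r par p \<longleftrightarrow> p \<noteq> [] \<and> set p \<subseteq> N \<and>
     (\<forall>i. Suc i < length p \<longrightarrow> p ! Suc i \<noteq> r \<and> par (p ! Suc i) = p ! i)"

definition rdv_rep :: "'v set \<Rightarrow> ('v \<Rightarrow> 'v \<Rightarrow> bool) \<Rightarrow> 'n set \<Rightarrow> 'n \<Rightarrow> ('n \<Rightarrow> 'n)
    \<Rightarrow> ('v \<Rightarrow> 'n list) \<Rightarrow> bool" where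
  "rdv_rep V E N r par P \<longleftrightarrow> rooted_tree N r par \<and>
     (\<forall>v\<in>V. downward_path N r par (P v)) \<and>
     (\<forall>v\<in>V. \<forall>w\<in>V. v \<noteq> w \<longrightarrow> (E v w \<longleftrightarrow> set (P v) \<inter> set (P w) \<noteq> {}))"

text \<open>t(v): the node of P(v) closest to the root (the head of the downward path).\<close>
definition top_node :: "('v \<Rightarrow> 'n list) \<Rightarrow> 'v \<Rightarrow> 'n" where
  "top_node P v = hd (P v)"

end

theory Submission
  imports Defs
begin

text \<open>Let \<open>t\<^sub>1 = t(v\<^sub>1)\<close>. A downward path containing a node \<open>x\<close> contains every
  ancestor of \<open>x\<close> that is not above its own top. Every path meeting \<open>P(v\<^sub>1)\<close> has its top
  no deeper than \<open>t\<^sub>1\<close>, hence contains \<open>t\<^sub>1\<close>; so all paths of \<open>N[v\<^sub>1]\<close> pass through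
  \<open>t\<^sub>1\<close> and \<open>N[v\<^sub>1]\<close> is a clique. If \<open>w, w' \<in> N[v\<^sub>1]\<close> and \<open>t(w')\<close> is not deeper than
  \<open>t(w)\<close>, then every path meeting \<open>P(w)\<close> either meets it at or below \<open>t\<^sub>1\<close> (and then
  contains \<open>t\<^sub>1\<close>) or between \<open>t(w)\<close> and \<open>t\<^sub>1\<close> (a stretch also covered by \<open>P(w')\<close>), so
  \<open>N[w] \<subseteq> N[w']\<close>. Listing \<open>N[v\<^sub>1]\<close> by decreasing depth of the tops gives the
  required order.\<close>

lemma depth_par:
  assumes T: "rooted_tree N r par" and x: "x \<in> N" "x \<noteq> r"
  shows "depth r par x = Suc (depth r par (par x))"
proof -
  have "par x \<in> N" using T x unfolding rooted_tree_def by auto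
  then obtain k where k: "(par ^^ k) (par x) = r" using T unfolding rooted_tree_def by auto
  obtain m where m: "(par ^^ m) x = r" using T x unfolding rooted_tree_def by auto
  define n where "n = depth r par (par x)"
  have "(par ^^ n) (par x) = r" unfolding n_def depth_def using k by (rule LeastI)
  then have "(par ^^ Suc n) x = r" by (simp add: funpow_Suc_right del: funpow.simps)
  then have le: "depth r par x \<le> Suc n" unfolding depth_def by (rule Least_le)
  have dx: "(par ^^ depth r par x) x = r" unfolding depth_def using m by (rule LeastI)
  then obtain m' where m': "depth r par x = Suc m'" using x by (cases "depth r par x") auto
  then have "(par ^^ m') (par x) = r" using dx by (simp add: funpow_Suc_right del: funpow.simps)
  then have "n \<le> m'" unfolding n_def depth_def by (rule Least_le)
  then show ?thesis using le m' n_def by simp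
qed

lemma downward_path_depth:
  assumes T: "rooted_tree N r par" and p: "downward_path N r par p" and i: "i < length p"
  shows "depth r par (p ! i) = depth r par (hd p) + i"
  using i
proof (induction i)
  case 0
  then show ?case by (simp add: hd_conv_nth)
next
  case (Suc i)
  have "p ! Suc i \<noteq> r" "par (p ! Suc i) = p ! i" "p ! Suc i \<in> N"
    using p Suc.prems unfolding downward_path_def by (auto dest: nth_mem)
  then show ?case using depth_par[OF T] Suc by simp
qed

lemma downward_path_funpow_par:
  assumes p: "downward_path N r par p" and "k + i < length p"
  shows "(par ^^ k) (p ! (i + k)) = p ! i"
  using assms(2)
proof (induction k)
  case 0
  then show ?case by simp
next
  case (Suc k)
  have "par (p ! (i + Suc k)) = p ! (i + k)"
    using p Suc.prems unfolding downward_path_def by (simp add: add.commute)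
  then show ?case using Suc by (simp add: funpow_Suc_right del: funpow.simps)
qed

lemma downward_path_ancestor_mem:
  assumes T: "rooted_tree N r par"
    and p: "downward_path N r par p" and q: "downward_path N r par q"
    and ki: "k \<le> i" and i: "i < length p" and pi: "p ! i \<in> set q"
    and top: "depth r par (hd q) \<le> depth r par (p ! k)"
  shows "p ! k \<in> set q"
proof -
  obtain j where j: "j < length q" "q ! j = p ! i" using pi by (auto simp: in_set_conv_nth)
  have "depth r par (p ! i) = depth r par (p ! k) + (i - k)"
    using downward_path_depth[OF T p] i ki by simp
  moreover have "depth r par (q ! j) = depth r par (hd q) + j"
    using downward_path_depth[OF T q j(1)] .
  ultimately have ij: "i - k \<le> j" using top j(2) by simp
  have "(par ^^ (i - k)) (q ! (j - (i - k) + (i - k))) = q ! (j - (i - k))"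
    using downward_path_funpow_par[OF q, of "i - k" "j - (i - k)"] j(1) ij by simp
  moreover have "(par ^^ (i - k)) (p ! (k + (i - k))) = p ! k"
    using downward_path_funpow_par[OF p, of "i - k" k] i ki by simp
  ultimately have "q ! (j - (i - k)) = p ! k" using ij ki j(2) by simp
  then show ?thesis using j(1) by (metis diff_le_self le_less_trans nth_mem)
qed

lemma exists_sorted_list_by_decreasing_key:
  fixes f :: "'a \<Rightarrow> 'b::linorder"
  assumes "finite S" and "\<And>a b. a \<in> S \<Longrightarrow> b \<in> S \<Longrightarrow> f b \<le> f a \<Longrightarrow> R a b"
  shows "\<exists>ws. distinct ws \<and> set ws = S \<and> sorted_wrt R ws"
proof -
  obtain xs where xs: "distinct xs" "set xs = S" using finite_distinct_list[OF assms(1)] by blast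
  define ws where "ws = rev (sort_key f xs)"
  have "sorted_wrt (\<lambda>a b. f b \<le> f a) ws"
    unfolding ws_def sorted_wrt_rev by (simp flip: sorted_wrt_map)
  then have "sorted_wrt R ws"
    by (rule sorted_wrt_mono_rel[rotated]) (use assms(2) xs in \<open>auto simp: ws_def\<close>)
  moreover have "distinct ws" "set ws = S" using xs by (auto simp: ws_def)
  ultimately show ?thesis by blast
qed

locale rdv_deepest_top =
  fixes V :: "'v set" and E :: "'v \<Rightarrow> 'v \<Rightarrow> bool"
    and N :: "'n set" and r :: 'n and par :: "'n \<Rightarrow> 'n" and P :: "'v \<Rightarrow> 'n list"
    and v1 :: 'v
  assumes rdv: "rdv_rep V E N r par P"
    and v1: "v1 \<in> V"
    and deepest: "\<forall>v\<in>V. depth r par (top_node P v) \<le> depth r par (top_node P v1)"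
begin

abbreviation top_depth :: "'v \<Rightarrow> nat" where
  "top_depth v \<equiv> depth r par (top_node P v)"

lemma tree: "rooted_tree N r par"
  using rdv unfolding rdv_rep_def by blast

lemma path: "v \<in> V \<Longrightarrow> downward_path N r par (P v)"
  using rdv unfolding rdv_rep_def by blast

lemma adjacent_iff: "v \<in> V \<Longrightarrow> w \<in> V \<Longrightarrow> v \<noteq> w \<Longrightarrow> E v w \<longleftrightarrow> set (P v) \<inter> set (P w) \<noteq> {}"
  using rdv unfolding rdv_rep_def by blast

lemma closed_nbhd_subset: "closed_nbhd V E v1 \<subseteq> V"
  using v1 unfolding closed_nbhd_def by auto

lemma top_node_mem: "v \<in> V \<Longrightarrow> top_node P v \<in> set (P v)"
  using path unfolding downward_path_def top_node_def by simp

lemma top_node_v1_mem_of_meets: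
  assumes w: "w \<in> V" and x: "x \<in> set (P v1)" "x \<in> set (P w)"
  shows "top_node P v1 \<in> set (P w)"
proof -
  obtain i where i: "i < length (P v1)" "P v1 ! i = x" using x(1) by (auto simp: in_set_conv_nth)
  have "P v1 ! 0 \<in> set (P w)"
    using downward_path_ancestor_mem[OF tree path[OF v1] path[OF w], of 0 i] i x(2)
      deepest w path[OF v1] by (auto simp: top_node_def hd_conv_nth downward_path_def)
  then show ?thesis using path[OF v1] by (simp add: top_node_def hd_conv_nth downward_path_def)
qed

lemma top_node_v1_mem_closed_nbhd:
  assumes "w \<in> closed_nbhd V E v1"
  shows "top_node P v1 \<in> set (P w)"
proof (cases "w = v1")
  case True
  then show ?thesis using top_node_mem[OF v1] by simp
next
  case False
  then have "w \<in> V" "E v1 w" using assms unfolding closed_nbhd_def by auto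
  then show ?thesis
    using adjacent_iff[OF v1] False top_node_v1_mem_of_meets by blast
qed

lemma closed_nbhd_is_clique: "is_clique E (closed_nbhd V E v1)"
  unfolding is_clique_def
proof (intro ballI impI)
  fix a b assume a: "a \<in> closed_nbhd V E v1" and b: "b \<in> closed_nbhd V E v1" and "a \<noteq> b"
  then show "E a b"
    using adjacent_iff closed_nbhd_subset top_node_v1_mem_closed_nbhd[OF a]
      top_node_v1_mem_closed_nbhd[OF b] by blast
qed

lemma meets_higher_top:
  assumes w: "w \<in> closed_nbhd V E v1" and w': "w' \<in> closed_nbhd V E v1"
    and higher: "top_depth w' \<le> top_depth w"
    and u: "u \<in> V" and x: "x \<in> set (P w)" "x \<in> set (P u)"
  shows "set (P w') \<inter> set (P u) \<noteq> {}"
proof -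
  have wV: "w \<in> V" and w'V: "w' \<in> V" using w w' closed_nbhd_subset by auto
  obtain a where a: "a < length (P w)" "P w ! a = top_node P v1"
    using top_node_v1_mem_closed_nbhd[OF w] by (auto simp: in_set_conv_nth)
  obtain j where j: "j < length (P w)" "P w ! j = x" using x(1) by (auto simp: in_set_conv_nth)
  show ?thesis
  proof (cases "a \<le> j")
    case True
    \<comment> \<open>\<open>P(u)\<close> meets \<open>P(w)\<close> at or below \<open>t\<^sub>1\<close>\<close>
    have "P w ! a \<in> set (P u)"
      using downward_path_ancestor_mem[OF tree path[OF wV] path[OF u] True j(1)] j(2) x(2)
        a(2) deepest u by (simp add: top_node_def)
    then show ?thesis using a(2) top_node_v1_mem_closed_nbhd[OF w'] by auto
  next
    case False
    \<comment> \<open>\<open>P(u)\<close> meets \<open>P(w)\<close> strictly between \<open>t(w)\<close> and \<open>t\<^sub>1\<close>\<close>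
    have "depth r par (P w ! j) = top_depth w + j"
      using downward_path_depth[OF tree path[OF wV] j(1)] by (simp add: top_node_def)
    then have "P w ! j \<in> set (P w')"
      using downward_path_ancestor_mem[OF tree path[OF wV] path[OF w'V], of j a] False a
        top_node_v1_mem_closed_nbhd[OF w'] higher by (simp add: top_node_def)
    then show ?thesis using j(2) x(2) by auto
  qed
qed

lemma closed_nbhd_mono_top_depth:
  assumes w: "w \<in> closed_nbhd V E v1" and w': "w' \<in> closed_nbhd V E v1"
    and higher: "top_depth w' \<le> top_depth w"
  shows "closed_nbhd V E w \<subseteq> closed_nbhd V E w'"
proof
  fix u assume u: "u \<in> closed_nbhd V E w"
  have wV: "w \<in> V" and w'V: "w' \<in> V" using w w' closed_nbhd_subset by auto
  consider "u = w'" | "u = w" "u \<noteq> w'" | "u \<noteq> w" "u \<noteq> w'" by blast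
  then show "u \<in> closed_nbhd V E w'"
  proof cases
    case 1
    then show ?thesis unfolding closed_nbhd_def by simp
  next
    case 2
    then have "w' \<noteq> w" by simp
    then have "E w' w" using closed_nbhd_is_clique w w' unfolding is_clique_def by blast
    then show ?thesis using 2 wV unfolding closed_nbhd_def by simp
  next
    case 3
    then have uV: "u \<in> V" and "E w u" using u unfolding closed_nbhd_def by auto
    then obtain x where "x \<in> set (P w)" "x \<in> set (P u)" using adjacent_iff[OF wV uV] 3 by auto
    then have "E w' u"
      using meets_higher_top[OF w w' higher uV] adjacent_iff[OF w'V uV] 3 by blast
    then show ?thesis unfolding closed_nbhd_def using uV by auto
  qed
qed

end

theorem mainTheorem6:
  fixes V :: "'v set" and E :: "'v \<Rightarrow> 'v \<Rightarrow> bool"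
    and N :: "'n set" and r :: 'n and par :: "'n \<Rightarrow> 'n" and P :: "'v \<Rightarrow> 'n list"
    and v1 :: 'v
  assumes "simple_graph V E"
    and "rdv_rep V E N r par P"
    and "v1 \<in> V"
    and "\<forall>v\<in>V. depth r par (top_node P v) \<le> depth r par (top_node P v1)"
  shows "simple_vertex V E v1"
proof -
  interpret rdv_deepest_top V E N r par P v1
    using assms(2-4) by unfold_locales
  have "finite (closed_nbhd V E v1)"
    using assms(1) closed_nbhd_subset finite_subset unfolding simple_graph_def by blast
  then have "\<exists>ws. distinct ws \<and> set ws = closed_nbhd V E v1 \<and>
      sorted_wrt (\<lambda>a b. closed_nbhd V E a \<subseteq> closed_nbhd V E b) ws"
    by (rule exists_sorted_list_by_decreasing_key[where f = top_depth])
      (rule closed_nbhd_mono_top_depth)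
  then show ?thesis unfolding simple_vertex_def using closed_nbhd_is_clique by blast
qed

end
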